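(* Let $\varepsilon,\delta\ge0$, $\alpha\ge0$, $p\in[0,1]$. Suppose $\mathcal M$ is an $(\varepsilon,\delta)$-DP mechanism for offline prefix-sum estimation on inputs $s\in\mathbb R^n$ that outputs $(a^1,\dots,a^n)$ with $\max_{k\in[n]}|a^k-\sum_{i=1}^k s_i|\le\alpha$ with probability at least $p$. Then the mechanism that, given a frequency vector $f\in\mathbb N^n$, sorts $f$ in non-increasing order to obtain $s$ and outputs $\mathcal M(s)$ is $(\varepsilon,\delta)$-DP for static $\textsc{TopK}$, and with probability at least $p$ its output satisfies $|a^k-\|f\|_{\mathrm{top}\text{-}k}|\le\alpha$ for all $k\in[n]$.
   Context: Offline prefix-sum estimation: input $s=(s_1,\dots,s_n)\in\mathbb R^n$, output estimates $a^k$ of $\sum_{i\le k}s_i$ for all $k\in[n]$; inputs $s,s'$ are neighboring if $\|s-s'\|_1\le1$. Static $\textsc{TopK}$: input a frequency vector $f\in\mathbb N^n$ (of a set of updates given up front); output estimates of $\|f\|_{\mathrm{top}\text{-}k}=\sum_{i=1}^kf_{\sigma(i)}$ for all $k\in[n]$, where $\sigma$ sorts $f$ in non-increasing order; two frequency vectors are neighboring if they agree in all coordinates except one, where they differ by exactly $1$. $(\varepsilon,\delta)$-DP: $\Pr[\mathcal A(x)\in S]\le e^\varepsilon\Pr[\mathcal A(y)\in S]+\delta$ for neighbors $x,y$ and all output sets $S$. *)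

theory Defs
  imports "HOL-Probability.Probability"
begin

definition DP :: "('a \<Rightarrow> 'a \<Rightarrow> bool) \<Rightarrow> 'a set \<Rightarrow> ('a \<Rightarrow> 'b measure) \<Rightarrow> real \<Rightarrow> real \<Rightarrow> bool" where
  "DP nb X M \<epsilon> \<delta> \<longleftrightarrow>
     (\<forall>x\<in>X. \<forall>y\<in>X. nb x y \<longrightarrow>
        (\<forall>S\<in>sets (M x). measure (M x) S \<le> exp \<epsilon> * measure (M y) S + \<delta>))"

text \<open>Inputs s in R^n are lists of length n; entry s_i is s ! (i-1).
  Neighbouring for prefix sums: L1 distance at most 1.\<close>
definition prefix_nb :: "real list \<Rightarrow> real list \<Rightarrow> bool" where
  "prefix_nb s s' \<longleftrightarrow> length s = length s' \<and> (\<Sum>i<length s. \<bar>s ! i - s' ! i\<bar>) \<le> 1"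

definition freq_nb :: "nat list \<Rightarrow> nat list \<Rightarrow> bool" where
  "freq_nb f g \<longleftrightarrow> length f = length g \<and>
     (\<exists>i<length f. (\<forall>j<length f. j \<noteq> i \<longrightarrow> f ! j = g ! j) \<and>
                   \<bar>int (f ! i) - int (g ! i)\<bar> = 1)"

definition sort_desc :: "nat list \<Rightarrow> nat list" where
  "sort_desc f = rev (sort f)"

definition topk_norm :: "nat list \<Rightarrow> nat \<Rightarrow> nat" where
  "topk_norm f k = sum_list (take k (sort_desc f))"

text \<open>Output a :: nat => real, where a k is the estimate for index k in [n].
  Accuracy event for prefix sums of s (length n).\<close>
definition prefix_good :: "nat \<Rightarrow> real \<Rightarrow> real list \<Rightarrow> (nat \<Rightarrow> real) set \<Rightarrow> (nat \<Rightarrow> real) set" where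
  "prefix_good n \<alpha> s \<Omega> = {a \<in> \<Omega>. \<forall>k\<in>{1..n}. \<bar>a k - (\<Sum>i<k. s ! i)\<bar> \<le> \<alpha>}"

definition topk_good :: "nat \<Rightarrow> real \<Rightarrow> nat list \<Rightarrow> (nat \<Rightarrow> real) set \<Rightarrow> (nat \<Rightarrow> real) set" where
  "topk_good n \<alpha> f \<Omega> = {a \<in> \<Omega>. \<forall>k\<in>{1..n}. \<bar>a k - real (topk_norm f k)\<bar> \<le> \<alpha>}"

end

theory Submission
  imports Defs
begin

text \<open>The prefix sums of the non-increasingly sorted frequency vector are exactly its top-k
  norms, so accuracy transfers verbatim. For privacy, incrementing one entry of f by 1
  increments exactly one entry of its sorted version (the last occurrence of the old value),
  so neighbouring frequency vectors have sorted versions at L1 distance 1 and the guarantee of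
  the prefix-sum mechanism applies.\<close>

lemma length_sort_desc [simp]: "length (sort_desc f) = length f"
  by (simp add: sort_desc_def)

lemma DP_precompose:
  assumes "DP nb Y M \<epsilon> \<delta>"
    and "h ` X \<subseteq> Y"
    and "\<And>x y. x \<in> X \<Longrightarrow> y \<in> X \<Longrightarrow> nb' x y \<Longrightarrow> nb (h x) (h y)"
  shows "DP nb' X (M \<circ> h) \<epsilon> \<delta>"
  using assms unfolding DP_def by (simp add: image_subset_iff)

lemma sorted_list_update_Suc:
  fixes xs :: "nat list"
  assumes "sorted xs" and "j < length xs"
    and "\<And>q. j < q \<Longrightarrow> q < length xs \<Longrightarrow> xs ! j < xs ! q"
  shows "sorted (xs[j := Suc (xs ! j)])"
  unfolding sorted_iff_nth_mono
proof (intro allI impI)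
  fix a b assume ab: "a \<le> b" "b < length (xs[j := Suc (xs ! j)])"
  have mono: "xs ! a \<le> xs ! b" using assms(1) ab by (simp add: sorted_nth_mono)
  consider "a = j" "b = j" | "a = j" "j < b" | "a \<noteq> j" "b = j" | "a \<noteq> j" "b \<noteq> j"
    using ab(1) by linarith
  then show "xs[j := Suc (xs ! j)] ! a \<le> xs[j := Suc (xs ! j)] ! b"
    by cases (use ab mono assms(3)[of b] in auto)
qed

lemma sort_list_update_Suc:
  fixes xs :: "nat list"
  assumes i: "i < length xs"
  obtains j where "j < length xs" "sort (xs[i := Suc (xs ! i)]) = (sort xs)[j := Suc (sort xs ! j)]"
proof -
  define ys where "ys = sort xs"
  define J where "J = {k. k < length ys \<and> ys ! k = xs ! i}"
  have "xs ! i \<in> set ys" using i by (simp add: ys_def)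
  then have "J \<noteq> {}" by (auto simp: J_def in_set_conv_nth)
  moreover have "finite J" by (simp add: J_def)
  ultimately have "Max J \<in> J" and Max_ge: "\<And>k. k \<in> J \<Longrightarrow> k \<le> Max J" by simp_all
  define j where "j = Max J"
  have j: "j < length ys" "ys ! j = xs ! i" using \<open>Max J \<in> J\<close> by (simp_all add: j_def J_def)
  have "ys ! j < ys ! q" if "j < q" "q < length ys" for q
  proof -
    have "ys ! j \<le> ys ! q" using that by (simp add: ys_def sorted_nth_mono)
    moreover have "q \<notin> J" using that Max_ge j_def by fastforce
    ultimately show ?thesis using that j by (auto simp: J_def)
  qed
  then have "sorted (ys[j := Suc (ys ! j)])"
    using j(1) by (intro sorted_list_update_Suc) (simp_all add: ys_def)
  moreover have "mset (ys[j := Suc (ys ! j)]) = mset (xs[i := Suc (xs ! i)])"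
    using i j by (simp add: mset_update ys_def)
  ultimately have "sort (xs[i := Suc (xs ! i)]) = ys[j := Suc (ys ! j)]"
    by (intro properties_for_sort) simp_all
  with j(1) that show ?thesis by (simp add: ys_def)
qed

lemma sort_desc_list_update_Suc:
  assumes "i < length f"
  obtains j where "j < length f"
    "sort_desc (f[i := Suc (f ! i)]) = (sort_desc f)[j := Suc (sort_desc f ! j)]"
proof -
  obtain j where j: "j < length f" "sort (f[i := Suc (f ! i)]) = (sort f)[j := Suc (sort f ! j)]"
    using sort_list_update_Suc[OF assms] .
  have "length f - j - 1 < length f" using j(1) by simp
  with j show ?thesis
    by (intro that[of "length f - j - 1"]) (simp_all add: sort_desc_def rev_update rev_nth)
qed

lemma prefix_nb_sym: "prefix_nb s s' \<Longrightarrow> prefix_nb s' s"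
  unfolding prefix_nb_def by (metis (no_types, lifting) abs_minus_commute sum.cong)

lemma prefix_nb_list_update_Suc:
  fixes xs :: "nat list"
  assumes "j < length xs"
  shows "prefix_nb (map real xs) (map real (xs[j := Suc (xs ! j)]))"
proof -
  have "(\<Sum>q<length xs. \<bar>map real xs ! q - map real (xs[j := Suc (xs ! j)]) ! q\<bar>)
      = (\<Sum>q<length xs. if q = j then 1 else 0)"
    by (intro sum.cong) (auto simp: nth_list_update)
  also have "\<dots> = 1" using assms by simp
  finally show ?thesis unfolding prefix_nb_def by simp
qed

lemma freq_nb_cases:
  assumes "freq_nb f g"
  obtains i where "i < length f" "g = f[i := Suc (f ! i)]"
    | i where "i < length g" "f = g[i := Suc (g ! i)]"
proof -
  from assms obtain i where i: "i < length f" and len: "length f = length g"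
    and same: "\<forall>j<length f. j \<noteq> i \<longrightarrow> f ! j = g ! j"
    and diff: "\<bar>int (f ! i) - int (g ! i)\<bar> = 1"
    unfolding freq_nb_def by blast
  show ?thesis
  proof (cases "g ! i = Suc (f ! i)")
    case True
    then have "g = f[i := Suc (f ! i)]"
      using i len same by (intro nth_equalityI) (auto simp: nth_list_update)
    with i that(1) show ?thesis by blast
  next
    case False
    then have "f = g[i := Suc (g ! i)]"
      using i len same diff by (intro nth_equalityI) (auto simp: nth_list_update)
    with i len that(2) show ?thesis by simp
  qed
qed

lemma prefix_nb_sort_desc:
  assumes "freq_nb f g"
  shows "prefix_nb (map real (sort_desc f)) (map real (sort_desc g))"
proof -
  have incr: "prefix_nb (map real (sort_desc xs)) (map real (sort_desc (xs[i := Suc (xs ! i)])))"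
    if i: "i < length xs" for xs i
  proof -
    obtain j where "j < length xs"
      "sort_desc (xs[i := Suc (xs ! i)]) = (sort_desc xs)[j := Suc (sort_desc xs ! j)]"
      using sort_desc_list_update_Suc[OF i] .
    then show ?thesis by (simp add: prefix_nb_list_update_Suc sort_desc_def)
  qed
  from assms show ?thesis
    by (cases rule: freq_nb_cases) (auto intro: prefix_nb_sym incr)
qed

lemma topk_norm_eq_prefix_sum:
  assumes "k \<le> length f"
  shows "real (topk_norm f k) = (\<Sum>i<k. map real (sort_desc f) ! i)"
proof -
  have "topk_norm f k = (\<Sum>i<k. sort_desc f ! i)"
    using assms by (simp add: topk_norm_def sum_list_sum_nth sort_desc_def atLeast0LessThan)
  then show ?thesis using assms by (simp add: sort_desc_def)
qed

lemma topk_good_eq_prefix_good: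
  assumes "length f = n"
  shows "topk_good n \<alpha> f \<Omega> = prefix_good n \<alpha> (map real (sort_desc f)) \<Omega>"
  using assms unfolding topk_good_def prefix_good_def by (simp add: topk_norm_eq_prefix_sum)

theorem mainTheorem16:
  fixes M :: "real list \<Rightarrow> (nat \<Rightarrow> real) measure"
    and N :: "(nat \<Rightarrow> real) measure"
    and n :: nat and \<epsilon> \<delta> \<alpha> p :: real
  assumes "\<epsilon> \<ge> 0" and "\<delta> \<ge> 0" and "\<alpha> \<ge> 0" and "0 \<le> p" and "p \<le> 1"
    and mech: "\<forall>s. length s = n \<longrightarrow> prob_space (M s) \<and> sets (M s) = sets N"
    and dp: "DP prefix_nb {s. length s = n} M \<epsilon> \<delta>"
    and acc: "\<forall>s. length s = n \<longrightarrow>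
               prefix_good n \<alpha> s (space (M s)) \<in> sets (M s) \<and>
               measure (M s) (prefix_good n \<alpha> s (space (M s))) \<ge> p"
  shows "DP freq_nb {f. length f = n} (\<lambda>f. M (map real (sort_desc f))) \<epsilon> \<delta> \<and>
         (\<forall>f. length f = n \<longrightarrow>
             (let A = M (map real (sort_desc f)) in
               topk_good n \<alpha> f (space A) \<in> sets A \<and> measure A (topk_good n \<alpha> f (space A)) \<ge> p))"
proof
  have "DP freq_nb {f. length f = n} (M \<circ> (\<lambda>f. map real (sort_desc f))) \<epsilon> \<delta>"
    using dp by (rule DP_precompose) (auto simp: prefix_nb_sort_desc)
  then show "DP freq_nb {f. length f = n} (\<lambda>f. M (map real (sort_desc f))) \<epsilon> \<delta>"
    by (simp add: comp_def)
next
  show "\<forall>f. length f = n \<longrightarrow>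
          (let A = M (map real (sort_desc f)) in
            topk_good n \<alpha> f (space A) \<in> sets A \<and> measure A (topk_good n \<alpha> f (space A)) \<ge> p)"
    using acc by (simp add: topk_good_eq_prefix_good)
qed

end
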